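(* Let $(\mathfrak g,\cdot)$ be a perm algebra, $\omega\in(\mathfrak g\otimes\mathfrak g)^*$ symmetric such that $(\mathfrak g,\cdot,\omega)$ is a symplectic perm algebra, and $r=\sum r^1\otimes r^2\in\mathfrak g\otimes\mathfrak g$ symmetric. Assume (i) $r$ satisfies the classical perm Yang–Baxter equation $r_{13}r_{12}-r_{13}r_{23}+r_{23}r_{12}-r_{12}r_{23}=0$ in $(\mathfrak g,\cdot)$ (so $(\mathfrak g,\cdot,r,\Delta_r)$ is a quasitriangular perm bialgebra), and (ii) $\omega$ satisfies the classical co-perm Yang–Baxter equation in the perm coalgebra $(\mathfrak g,\Delta_r)$ (so $(\mathfrak g,\Delta_r,\omega,\cdot_\omega)$ is a dual quasitriangular perm bialgebra). Then $N:\mathfrak g\to\mathfrak g$, $N(x)=\omega(x,r^1)r^2$, is a Nijenhuis operator on $(\mathfrak g,\cdot)$, i.e. $N(x)N(y)+N^2(xy)=N(N(x)y)+N(xN(y))$ for all $x,y$.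
   Context: Over a field $K$. A (right) perm algebra: bilinear product with $(xy)z=x(yz)=x(zy)$. $(\mathfrak g,\cdot,\omega)$ symplectic: $\omega$ symmetric and $\omega(xy,z)+\omega(xz,y)=\omega(zx,y)+\omega(zy,x)$ for all $x,y,z$. For $r$ with second copy $\bar r$: $\Delta_r(x)=xr^1\otimes r^2+r^1\otimes xr^2-r^1\otimes r^2x$ (Sweedler notation $\Delta_r(x)=x_{(1)}\otimes x_{(2)}$); $r_{13}r_{12}=r^1\bar r^1\otimes\bar r^2\otimes r^2$, $r_{13}r_{23}=r^1\otimes\bar r^1\otimes r^2\bar r^2$, $r_{23}r_{12}=\bar r^1\otimes r^1\bar r^2\otimes r^2$, $r_{12}r_{23}=r^1\otimes r^2\bar r^1\otimes\bar r^2$. Classical co-perm Yang–Baxter equation in $(\mathfrak g,\Delta)$: $\omega(x_{(1)},z)\omega(x_{(2)},y)-\omega(x,z_{(1)})\omega(y,z_{(2)})+\omega(y_{(1)},z)\omega(x,y_{(2)})-\omega(x,y_{(1)})\omega(y_{(2)},z)=0$ for all $x,y,z$; $\cdot_\omega$ is $x\cdot_\omega y=x_{(1)}\omega(x_{(2)},y)+y_{(1)}\omega(x,y_{(2)})-y_{(2)}\omega(x,y_{(1)})$. *)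

theory Defs
  imports Main "HOL-Library.Function_Algebras"
begin

text \<open>A finite-dimensional vector space over a field 'k is modelled as 'n \<Rightarrow> 'k
  with 'n a finite index type (coordinates w.r.t. the standard basis).
  Elements of g\<otimes>g resp. g\<otimes>g\<otimes>g are their coordinate arrays.\<close>

type_synonym ('k, 'n) vec = "'n \<Rightarrow> 'k"

definition bvec :: "'n \<Rightarrow> ('k::field, 'n) vec" where
  "bvec i = (\<lambda>j. if j = i then 1 else 0)"

definition smul :: "'k::field \<Rightarrow> ('k, 'n) vec \<Rightarrow> ('k, 'n) vec" where
  "smul c x = (\<lambda>j. c * x j)"

definition bilinear_prod :: "(('k::field, 'n) vec \<Rightarrow> ('k, 'n) vec \<Rightarrow> ('k, 'n) vec) \<Rightarrow> bool" where
  "bilinear_prod m \<longleftrightarrow>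
     (\<forall>x y z. m (x + y) z = m x z + m y z) \<and> (\<forall>x y z. m x (y + z) = m x y + m x z) \<and>
     (\<forall>c x y. m (smul c x) y = smul c (m x y)) \<and> (\<forall>c x y. m x (smul c y) = smul c (m x y))"

definition bilinear_form :: "(('k::field, 'n) vec \<Rightarrow> ('k, 'n) vec \<Rightarrow> 'k) \<Rightarrow> bool" where
  "bilinear_form w \<longleftrightarrow>
     (\<forall>x y z. w (x + y) z = w x z + w y z) \<and> (\<forall>x y z. w x (y + z) = w x y + w x z) \<and>
     (\<forall>c x y. w (smul c x) y = c * w x y) \<and> (\<forall>c x y. w x (smul c y) = c * w x y)"

definition perm_algebra :: "(('k::field, 'n) vec \<Rightarrow> ('k, 'n) vec \<Rightarrow> ('k, 'n) vec) \<Rightarrow> bool" where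
  "perm_algebra m \<longleftrightarrow> bilinear_prod m \<and>
     (\<forall>x y z. m (m x y) z = m x (m y z) \<and> m x (m y z) = m x (m z y))"

definition symplectic_perm :: "(('k::field, 'n) vec \<Rightarrow> ('k, 'n) vec \<Rightarrow> ('k, 'n) vec)
     \<Rightarrow> (('k, 'n) vec \<Rightarrow> ('k, 'n) vec \<Rightarrow> 'k) \<Rightarrow> bool" where
  "symplectic_perm m w \<longleftrightarrow> perm_algebra m \<and> bilinear_form w \<and> (\<forall>x y. w x y = w y x) \<and>
     (\<forall>x y z. w (m x y) z + w (m x z) y = w (m z x) y + w (m z y) x)"

definition sym_tensor :: "('n \<Rightarrow> 'n \<Rightarrow> 'k) \<Rightarrow> bool" where
  "sym_tensor r \<longleftrightarrow> (\<forall>i j. r i j = r j i)"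

definition simple2 :: "('k::field, 'n) vec \<Rightarrow> ('k, 'n) vec \<Rightarrow> 'n \<Rightarrow> 'n \<Rightarrow> 'k" where
  "simple2 a b = (\<lambda>p q. a p * b q)"

definition simple3 :: "('k::field, 'n) vec \<Rightarrow> ('k, 'n) vec \<Rightarrow> ('k, 'n) vec \<Rightarrow> 'n \<Rightarrow> 'n \<Rightarrow> 'n \<Rightarrow> 'k" where
  "simple3 a b c = (\<lambda>p q s. a p * b q * c s)"

text \<open>With r = \<Sum>_{i,j} r i j e_i \<otimes> e_j and second copy r-bar = \<Sum>_{k,l} r k l e_k \<otimes> e_l.\<close>
definition r13r12 where
  "r13r12 m r = (\<Sum>i\<in>UNIV. \<Sum>j\<in>UNIV. \<Sum>k\<in>UNIV. \<Sum>l\<in>UNIV. (\<lambda>p q s. r i j * r k l * simple3 (m (bvec i) (bvec k)) (bvec l) (bvec j) p q s))"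
definition r13r23 where
  "r13r23 m r = (\<Sum>i\<in>UNIV. \<Sum>j\<in>UNIV. \<Sum>k\<in>UNIV. \<Sum>l\<in>UNIV. (\<lambda>p q s. r i j * r k l * simple3 (bvec i) (bvec k) (m (bvec j) (bvec l)) p q s))"
definition r23r12 where
  "r23r12 m r = (\<Sum>i\<in>UNIV. \<Sum>j\<in>UNIV. \<Sum>k\<in>UNIV. \<Sum>l\<in>UNIV. (\<lambda>p q s. r i j * r k l * simple3 (bvec k) (m (bvec i) (bvec l)) (bvec j) p q s))"
definition r12r23 where
  "r12r23 m r = (\<Sum>i\<in>UNIV. \<Sum>j\<in>UNIV. \<Sum>k\<in>UNIV. \<Sum>l\<in>UNIV. (\<lambda>p q s. r i j * r k l * simple3 (bvec i) (m (bvec j) (bvec k)) (bvec l) p q s))"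

definition CPYBE :: "(('k::field, 'n::finite) vec \<Rightarrow> ('k, 'n) vec \<Rightarrow> ('k, 'n) vec) \<Rightarrow> ('n \<Rightarrow> 'n \<Rightarrow> 'k) \<Rightarrow> bool" where
  "CPYBE m r \<longleftrightarrow> r13r12 m r - r13r23 m r + r23r12 m r - r12r23 m r = 0"

definition Delta_r :: "(('k::field, 'n::finite) vec \<Rightarrow> ('k, 'n) vec \<Rightarrow> ('k, 'n) vec) \<Rightarrow> ('n \<Rightarrow> 'n \<Rightarrow> 'k)
     \<Rightarrow> ('k, 'n) vec \<Rightarrow> 'n \<Rightarrow> 'n \<Rightarrow> 'k" where
  "Delta_r m r x = (\<Sum>i\<in>UNIV. \<Sum>j\<in>UNIV. (\<lambda>p q. r i j *
      (simple2 (m x (bvec i)) (bvec j) p q + simple2 (bvec i) (m x (bvec j)) p q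
       - simple2 (bvec i) (m (bvec j) x) p q)))"

text \<open>Evaluating a bilinear expression f(x_(1), x_(2)) on a tensor T = \<Sum> x_(1) \<otimes> x_(2).\<close>
definition tpair :: "('n::finite \<Rightarrow> 'n \<Rightarrow> 'k::field) \<Rightarrow> (('k, 'n) vec \<Rightarrow> ('k, 'n) vec \<Rightarrow> 'k) \<Rightarrow> 'k" where
  "tpair T f = (\<Sum>p\<in>UNIV. \<Sum>q\<in>UNIV. T p q * f (bvec p) (bvec q))"

definition coPYBE :: "(('k::field, 'n::finite) vec \<Rightarrow> 'n \<Rightarrow> 'n \<Rightarrow> 'k) \<Rightarrow> (('k, 'n) vec \<Rightarrow> ('k, 'n) vec \<Rightarrow> 'k) \<Rightarrow> bool" where
  "coPYBE \<Delta> w \<longleftrightarrow> (\<forall>x y z.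
      tpair (\<Delta> x) (\<lambda>a b. w a z * w b y) - tpair (\<Delta> z) (\<lambda>a b. w x a * w y b)
    + tpair (\<Delta> y) (\<lambda>a b. w a z * w x b) - tpair (\<Delta> y) (\<lambda>a b. w x a * w b z) = 0)"

definition Nop :: "(('k::field, 'n::finite) vec \<Rightarrow> ('k, 'n) vec \<Rightarrow> 'k) \<Rightarrow> ('n \<Rightarrow> 'n \<Rightarrow> 'k) \<Rightarrow> ('k, 'n) vec \<Rightarrow> ('k, 'n) vec" where
  "Nop w r x = (\<Sum>i\<in>UNIV. \<Sum>j\<in>UNIV. smul (r i j * w x (bvec i)) (bvec j))"

definition nijenhuis :: "(('k::field, 'n) vec \<Rightarrow> ('k, 'n) vec \<Rightarrow> ('k, 'n) vec) \<Rightarrow> (('k, 'n) vec \<Rightarrow> ('k, 'n) vec) \<Rightarrow> bool" where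
  "nijenhuis m N \<longleftrightarrow> (\<forall>x y. m (N x) (N y) + N (N (m x y)) = N (m (N x) y) + N (m x (N y)))"

end

theory Submission
  imports Defs
begin

text \<open>Write \<open>r\<^sup>\<sharp>(f) = f(r\<^sup>1) r\<^sup>2\<close>, so that \<open>N(x) = r\<^sup>\<sharp>(\<omega>(x, -))\<close>. Applying
  \<open>\<omega>(x, -) \<otimes> \<omega>(y, -) \<otimes> id\<close> to the classical perm Yang--Baxter equation gives
  \<open>N(x) N(y) = r\<^sup>\<sharp>(\<phi>)\<close> with \<open>\<phi>(u) = \<omega>(x, u N(y)) + \<omega>(y, u N(x)) - \<omega>(y, N(x) u)\<close>.
  The co-perm Yang--Baxter equation for \<open>\<omega>\<close> at \<open>(x, y, u)\<close>, combined with the symplectic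
  identity at \<open>(x, y, N(u))\<close> and the \<open>\<omega>\<close>-self-adjointness of \<open>N\<close> (as \<open>r\<close> is symmetric),
  yields \<open>\<phi> + \<omega>(N(xy), -) = \<omega>(N(x) y + x N(y), -)\<close>; applying \<open>r\<^sup>\<sharp>\<close> gives the
  Nijenhuis identity.\<close>

lemma sum_apply: "sum f A x = (\<Sum>i\<in>A. f i x)"
  by (induction A rule: infinite_finite_induct) auto

lemma sum_swap_outer:
  "(\<Sum>j\<in>B. \<Sum>k\<in>C. \<Sum>l\<in>D. G j k l) = (\<Sum>k\<in>C. \<Sum>l\<in>D. \<Sum>j\<in>B. G j k l)"
  by (subst sum.swap) (rule sum.cong[OF refl], rule sum.swap)

lemma sum_swap_pairs:
  "(\<Sum>i\<in>A. \<Sum>j\<in>B. \<Sum>k\<in>C. \<Sum>l\<in>D. F i j k l) = (\<Sum>k\<in>C. \<Sum>l\<in>D. \<Sum>i\<in>A. \<Sum>j\<in>B. F i j k l)"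
  by (simp only: sum_swap_outer[where B = B] sum_swap_outer[where B = A])

lemma sum_mult_bvec: "(\<Sum>j\<in>(UNIV :: 'n::finite set). f j * bvec j s) = (f s :: 'k::field)"
  by (simp add: bvec_def if_distrib cong: if_cong)

lemma vec_expand: "(x :: ('k::field, 'n::finite) vec) = (\<Sum>i\<in>UNIV. smul (x i) (bvec i))"
  by (simp add: fun_eq_iff sum_apply smul_def sum_mult_bvec)

definition linear_form :: "(('k::field, 'n) vec \<Rightarrow> 'k) \<Rightarrow> bool" where
  "linear_form f \<longleftrightarrow> (\<forall>x y. f (x + y) = f x + f y) \<and> (\<forall>c x. f (smul c x) = c * f x)"

definition linear_map :: "(('k::field, 'n) vec \<Rightarrow> ('k, 'n) vec) \<Rightarrow> bool" where
  "linear_map f \<longleftrightarrow> (\<forall>x y. f (x + y) = f x + f y) \<and> (\<forall>c x. f (smul c x) = smul c (f x))"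

lemma linear_form_sum:
  assumes "linear_form f"
  shows "f (sum g A) = (\<Sum>i\<in>A. f (g i))"
proof -
  have add: "f (x + y) = f x + f y" for x y
    using assms by (simp add: linear_form_def)
  then have "f 0 = 0"
    by (metis add_cancel_right_right add_0)
  with add show ?thesis
    using sum_comp_morphism[of f g A] by (simp add: comp_def)
qed

lemma linear_form_expand:
  assumes "linear_form f"
  shows "f (x :: ('k::field, 'n::finite) vec) = (\<Sum>i\<in>UNIV. x i * f (bvec i))"
  by (subst vec_expand) (use assms in \<open>simp add: linear_form_sum linear_form_def\<close>)

lemma linear_form_comp: "linear_form f \<Longrightarrow> linear_map g \<Longrightarrow> linear_form (\<lambda>u. f (g u))"
  by (simp add: linear_form_def linear_map_def)

lemma linear_form_coordinate: "linear_form (\<lambda>u. u s)"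
  by (simp add: linear_form_def smul_def)

lemma bilinear_form_linear_left: "bilinear_form w \<Longrightarrow> linear_form (\<lambda>u. w u y)"
  by (simp add: linear_form_def bilinear_form_def)

lemma bilinear_form_linear_right: "bilinear_form w \<Longrightarrow> linear_form (w x)"
  by (simp add: linear_form_def bilinear_form_def)

lemma bilinear_prod_linear_left: "bilinear_prod m \<Longrightarrow> linear_map (\<lambda>u. m u y)"
  by (simp add: linear_map_def bilinear_prod_def)

lemma bilinear_prod_linear_right: "bilinear_prod m \<Longrightarrow> linear_map (m x)"
  by (simp add: linear_map_def bilinear_prod_def)

definition r_sharp :: "('n::finite \<Rightarrow> 'n \<Rightarrow> 'k::field) \<Rightarrow> (('k, 'n) vec \<Rightarrow> 'k) \<Rightarrow> ('k, 'n) vec" where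
  "r_sharp r f = (\<lambda>s. \<Sum>i\<in>UNIV. r i s * f (bvec i))"

lemma r_sharp_add: "r_sharp r (f + g) = r_sharp r f + r_sharp r g"
  by (simp add: r_sharp_def fun_eq_iff ring_distribs sum.distrib)

lemma r_sharp_diff: "r_sharp r (f - g) = r_sharp r f - r_sharp r g"
  by (simp add: r_sharp_def fun_eq_iff ring_distribs sum_subtractf)

lemma Nop_eq_r_sharp: "Nop w r x = r_sharp r (w x)"
proof
  fix s
  have "Nop w r x s = (\<Sum>i\<in>UNIV. \<Sum>j\<in>UNIV. (r i j * w x (bvec i)) * bvec j s)"
    by (simp add: Nop_def sum_apply smul_def)
  also have "\<dots> = r_sharp r (w x) s"
    by (simp only: sum_mult_bvec) (simp add: r_sharp_def mult.commute)
  finally show "Nop w r x s = r_sharp r (w x) s" .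
qed

lemma linear_form_r_sharp:
  assumes "linear_form l"
  shows "l (r_sharp r f) = (\<Sum>i\<in>UNIV. \<Sum>j\<in>UNIV. r i j * f (bvec i) * l (bvec j))"
proof -
  have "l (r_sharp r f) = (\<Sum>j\<in>UNIV. (\<Sum>i\<in>UNIV. r i j * f (bvec i)) * l (bvec j))"
    by (subst linear_form_expand[OF assms]) (simp add: r_sharp_def)
  also have "\<dots> = (\<Sum>i\<in>UNIV. \<Sum>j\<in>UNIV. r i j * f (bvec i) * l (bvec j))"
    by (simp add: sum_distrib_right) (rule sum.swap)
  finally show ?thesis .
qed

lemma linear_form_r_sharp_sym:
  assumes "linear_form l" and "sym_tensor r"
  shows "l (r_sharp r f) = (\<Sum>i\<in>UNIV. \<Sum>j\<in>UNIV. r i j * l (bvec i) * f (bvec j))"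
  using assms(2) unfolding linear_form_r_sharp[OF assms(1)] sym_tensor_def
  by (subst sum.swap) (simp add: mult_ac)

lemma Nop_self_adjoint:
  assumes "bilinear_form w" and w_sym: "\<And>x y. w x y = w y x" and "sym_tensor r"
  shows "w (Nop w r x) y = w x (Nop w r y)"
proof -
  have "w (Nop w r x) y = (\<Sum>i\<in>UNIV. \<Sum>j\<in>UNIV. r i j * w x (bvec i) * w y (bvec j))"
    unfolding w_sym[of _ y] Nop_eq_r_sharp
    by (rule linear_form_r_sharp[OF bilinear_form_linear_right[OF assms(1)]])
  also have "\<dots> = w x (Nop w r y)"
    unfolding Nop_eq_r_sharp
    by (rule linear_form_r_sharp_sym[OF bilinear_form_linear_right[OF assms(1)] assms(3), symmetric])
  finally show ?thesis .
qed

definition contract12 :: "(('k::field, 'n) vec \<Rightarrow> 'k) \<Rightarrow> (('k, 'n) vec \<Rightarrow> 'k)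
    \<Rightarrow> ('n::finite \<Rightarrow> 'n \<Rightarrow> 'n \<Rightarrow> 'k) \<Rightarrow> ('k, 'n) vec" where
  "contract12 f g T = (\<lambda>s. \<Sum>p\<in>UNIV. \<Sum>q\<in>UNIV. f (bvec p) * g (bvec q) * T p q s)"

lemma contract12_zero: "contract12 f g 0 = 0"
  by (simp add: contract12_def fun_eq_iff)

lemma contract12_add: "contract12 f g (T + U) = contract12 f g T + contract12 f g U"
  by (simp add: contract12_def fun_eq_iff ring_distribs sum.distrib)

lemma contract12_diff: "contract12 f g (T - U) = contract12 f g T - contract12 f g U"
  by (simp add: contract12_def fun_eq_iff ring_distribs sum_subtractf)

lemma contract12_sum: "contract12 f g (sum F A) = (\<Sum>i\<in>A. contract12 f g (F i))"
  using sum_comp_morphism[of "contract12 f g" F A] by (simp add: contract12_zero contract12_add comp_def)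

lemma contract12_simple3:
  assumes "linear_form f" and "linear_form g"
  shows "contract12 f g (\<lambda>p q s. c * simple3 a b e p q s) = (\<lambda>s. c * f a * g b * e s)"
proof
  fix s
  have "contract12 f g (\<lambda>p q s. c * simple3 a b e p q s) s
      = c * e s * ((\<Sum>p\<in>UNIV. a p * f (bvec p)) * (\<Sum>q\<in>UNIV. b q * g (bvec q)))"
    by (simp add: contract12_def simple3_def sum_product sum_distrib_left mult_ac) (rule sum.swap)
  then show "contract12 f g (\<lambda>p q s. c * simple3 a b e p q s) s = c * f a * g b * e s"
    by (simp only: linear_form_expand[OF assms(1), symmetric] linear_form_expand[OF assms(2), symmetric])
      (simp only: mult_ac)
qed

lemma contract12_r13r12:
  assumes bp: "bilinear_prod m" and bf: "bilinear_form w" and r_sym: "sym_tensor r"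
  shows "contract12 (w x) (w y) (r13r12 m r) = r_sharp r (\<lambda>u. w x (m u (Nop w r y)))"
proof
  fix s
  have left_mult: "linear_form (\<lambda>v. w x (m a v))" for a
    by (rule linear_form_comp[OF bilinear_form_linear_right[OF bf] bilinear_prod_linear_right[OF bp]])
  have "r_sharp r (\<lambda>u. w x (m u (Nop w r y))) s
      = (\<Sum>i\<in>UNIV. \<Sum>j\<in>UNIV. r i j * w x (m (bvec i) (Nop w r y)) * bvec j s)"
    by (rule linear_form_r_sharp[OF linear_form_coordinate])
  also have "\<dots> = (\<Sum>i\<in>UNIV. \<Sum>j\<in>UNIV. r i j * (\<Sum>k\<in>UNIV. \<Sum>l\<in>UNIV.
      r k l * w x (m (bvec i) (bvec k)) * w y (bvec l)) * bvec j s)"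
    by (simp only: Nop_eq_r_sharp linear_form_r_sharp_sym[OF left_mult r_sym])
  also have "\<dots> = contract12 (w x) (w y) (r13r12 m r) s"
    unfolding r13r12_def contract12_sum sum_apply
      contract12_simple3[OF bilinear_form_linear_right[OF bf] bilinear_form_linear_right[OF bf]]
    by (simp add: sum_distrib_left sum_distrib_right mult_ac)
  finally show "contract12 (w x) (w y) (r13r12 m r) s = r_sharp r (\<lambda>u. w x (m u (Nop w r y))) s"
    by (rule sym)
qed

lemma contract12_r23r12:
  assumes bp: "bilinear_prod m" and bf: "bilinear_form w"
  shows "contract12 (w x) (w y) (r23r12 m r) = r_sharp r (\<lambda>u. w y (m u (Nop w r x)))"
proof
  fix s
  have left_mult: "linear_form (\<lambda>v. w y (m a v))" for a
    by (rule linear_form_comp[OF bilinear_form_linear_right[OF bf] bilinear_prod_linear_right[OF bp]])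
  have "r_sharp r (\<lambda>u. w y (m u (Nop w r x))) s
      = (\<Sum>i\<in>UNIV. \<Sum>j\<in>UNIV. r i j * w y (m (bvec i) (Nop w r x)) * bvec j s)"
    by (rule linear_form_r_sharp[OF linear_form_coordinate])
  also have "\<dots> = (\<Sum>i\<in>UNIV. \<Sum>j\<in>UNIV. r i j * (\<Sum>k\<in>UNIV. \<Sum>l\<in>UNIV.
      r k l * w x (bvec k) * w y (m (bvec i) (bvec l))) * bvec j s)"
    by (simp only: Nop_eq_r_sharp linear_form_r_sharp[OF left_mult])
  also have "\<dots> = contract12 (w x) (w y) (r23r12 m r) s"
    unfolding r23r12_def contract12_sum sum_apply
      contract12_simple3[OF bilinear_form_linear_right[OF bf] bilinear_form_linear_right[OF bf]]
    by (simp add: sum_distrib_left sum_distrib_right mult_ac)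
  finally show "contract12 (w x) (w y) (r23r12 m r) s = r_sharp r (\<lambda>u. w y (m u (Nop w r x))) s"
    by (rule sym)
qed

lemma contract12_r12r23:
  assumes bp: "bilinear_prod m" and bf: "bilinear_form w"
  shows "contract12 (w x) (w y) (r12r23 m r) = r_sharp r (\<lambda>u. w y (m (Nop w r x) u))"
proof
  fix s
  have right_mult: "linear_form (\<lambda>v. w y (m v a))" for a
    by (rule linear_form_comp[OF bilinear_form_linear_right[OF bf] bilinear_prod_linear_left[OF bp]])
  have "r_sharp r (\<lambda>u. w y (m (Nop w r x) u)) s
      = (\<Sum>k\<in>UNIV. \<Sum>l\<in>UNIV. r k l * w y (m (Nop w r x) (bvec k)) * bvec l s)"
    by (rule linear_form_r_sharp[OF linear_form_coordinate])
  also have "\<dots> = (\<Sum>k\<in>UNIV. \<Sum>l\<in>UNIV. r k l * (\<Sum>i\<in>UNIV. \<Sum>j\<in>UNIV.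
      r i j * w x (bvec i) * w y (m (bvec j) (bvec k))) * bvec l s)"
    by (simp only: Nop_eq_r_sharp linear_form_r_sharp[OF right_mult])
  also have "\<dots> = (\<Sum>i\<in>UNIV. \<Sum>j\<in>UNIV. \<Sum>k\<in>UNIV. \<Sum>l\<in>UNIV.
      r i j * r k l * w x (bvec i) * w y (m (bvec j) (bvec k)) * bvec l s)"
    by (subst sum_swap_pairs) (simp add: sum_distrib_left sum_distrib_right mult_ac)
  also have "\<dots> = contract12 (w x) (w y) (r12r23 m r) s"
    unfolding r12r23_def contract12_sum sum_apply
      contract12_simple3[OF bilinear_form_linear_right[OF bf] bilinear_form_linear_right[OF bf]] ..
  finally show "contract12 (w x) (w y) (r12r23 m r) s = r_sharp r (\<lambda>u. w y (m (Nop w r x) u)) s"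
    by (rule sym)
qed

lemma contract12_r13r23:
  assumes bp: "bilinear_prod m" and bf: "bilinear_form w"
  shows "contract12 (w x) (w y) (r13r23 m r) = m (Nop w r x) (Nop w r y)"
proof
  fix s
  have left_coord: "linear_form (\<lambda>v. m v b s)" for b
    by (rule linear_form_comp[OF linear_form_coordinate bilinear_prod_linear_left[OF bp]])
  have right_coord: "linear_form (\<lambda>v. m a v s)" for a
    by (rule linear_form_comp[OF linear_form_coordinate bilinear_prod_linear_right[OF bp]])
  have "m (Nop w r x) (Nop w r y) s
      = (\<Sum>i\<in>UNIV. \<Sum>j\<in>UNIV. r i j * w x (bvec i) * m (bvec j) (Nop w r y) s)"
    by (simp only: Nop_eq_r_sharp[of w r x] linear_form_r_sharp[OF left_coord])
  also have "\<dots> = (\<Sum>i\<in>UNIV. \<Sum>j\<in>UNIV. r i j * w x (bvec i) * (\<Sum>k\<in>UNIV. \<Sum>l\<in>UNIV.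
      r k l * w y (bvec k) * m (bvec j) (bvec l) s))"
    by (simp only: Nop_eq_r_sharp linear_form_r_sharp[OF right_coord])
  also have "\<dots> = contract12 (w x) (w y) (r13r23 m r) s"
    unfolding r13r23_def contract12_sum sum_apply
      contract12_simple3[OF bilinear_form_linear_right[OF bf] bilinear_form_linear_right[OF bf]]
    by (simp add: sum_distrib_left mult_ac)
  finally show "contract12 (w x) (w y) (r13r23 m r) s = m (Nop w r x) (Nop w r y) s"
    by (rule sym)
qed

lemma CPYBE_Nop_mult:
  assumes "bilinear_prod m" and "bilinear_form w" and "sym_tensor r" and "CPYBE m r"
  defines "N \<equiv> Nop w r"
  shows "m (N x) (N y) = r_sharp r (\<lambda>u. w x (m u (N y))) + r_sharp r (\<lambda>u. w y (m u (N x)))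
    - r_sharp r (\<lambda>u. w y (m (N x) u))"
proof -
  have "contract12 (w x) (w y) (r13r12 m r - r13r23 m r + r23r12 m r - r12r23 m r) = 0"
    using assms(4) unfolding CPYBE_def by (simp only: contract12_zero)
  then have "r_sharp r (\<lambda>u. w x (m u (N y))) - m (N x) (N y) + r_sharp r (\<lambda>u. w y (m u (N x)))
      - r_sharp r (\<lambda>u. w y (m (N x) u)) = 0"
    unfolding N_def contract12_add contract12_diff contract12_r13r12[OF assms(1-3)]
      contract12_r13r23[OF assms(1,2)] contract12_r23r12[OF assms(1,2)]
      contract12_r12r23[OF assms(1,2)] .
  then show ?thesis
    by (simp add: algebra_simps)
qed

lemma tpair_sum: "tpair (sum F A) G = (\<Sum>i\<in>A. tpair (F i) G)"
  by (induction A rule: infinite_finite_induct) (auto simp: tpair_def ring_distribs sum.distrib)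

lemma tpair_scaled_add_diff:
  "tpair (\<lambda>p q. c * (X p q + Y p q - Z p q)) G = c * (tpair X G + tpair Y G - tpair Z G)"
  by (simp add: tpair_def ring_distribs sum.distrib sum_subtractf sum_distrib_left mult_ac)

lemma tpair_simple2:
  assumes "linear_form f" and "linear_form g"
  shows "tpair (simple2 a b) (\<lambda>u v. f u * g v) = f a * g b"
proof -
  have "tpair (simple2 a b) (\<lambda>u v. f u * g v)
      = (\<Sum>p\<in>UNIV. a p * f (bvec p)) * (\<Sum>q\<in>UNIV. b q * g (bvec q))"
    by (simp add: tpair_def simple2_def sum_product mult_ac)
  then show ?thesis
    by (simp only: linear_form_expand[OF assms(1), symmetric] linear_form_expand[OF assms(2), symmetric])
qed

lemma tpair_Delta_r:
  assumes "linear_form f" and "linear_form g"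
  shows "tpair (Delta_r m r x) (\<lambda>u v. f u * g v) = (\<Sum>i\<in>UNIV. \<Sum>j\<in>UNIV. r i j *
    (f (m x (bvec i)) * g (bvec j) + f (bvec i) * g (m x (bvec j)) - f (bvec i) * g (m (bvec j) x)))"
  unfolding Delta_r_def by (simp only: tpair_sum tpair_scaled_add_diff tpair_simple2[OF assms])

lemma tpair_Delta_r_omega:
  assumes bp: "bilinear_prod m" and bf: "bilinear_form w" and w_sym: "\<And>x y. w x y = w y x"
    and r_sym: "sym_tensor r"
  shows "tpair (Delta_r m r u) (\<lambda>a b. w a p * w b q)
    = w (m u (Nop w r q)) p + w (m u (Nop w r p)) q - w (m (Nop w r p) u) q"
proof -
  have left_mult: "linear_form (\<lambda>v. w (m u v) z)" for z
    by (rule linear_form_comp[OF bilinear_form_linear_left[OF bf] bilinear_prod_linear_right[OF bp]])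
  have right_mult: "linear_form (\<lambda>v. w (m v u) z)" for z
    by (rule linear_form_comp[OF bilinear_form_linear_left[OF bf] bilinear_prod_linear_left[OF bp]])
  have "tpair (Delta_r m r u) (\<lambda>a b. w a p * w b q)
     = (\<Sum>i\<in>UNIV. \<Sum>j\<in>UNIV. r i j * w (m u (bvec i)) p * w q (bvec j))
     + (\<Sum>i\<in>UNIV. \<Sum>j\<in>UNIV. r i j * w p (bvec i) * w (m u (bvec j)) q)
     - (\<Sum>i\<in>UNIV. \<Sum>j\<in>UNIV. r i j * w p (bvec i) * w (m (bvec j) u) q)"
    unfolding tpair_Delta_r[OF bilinear_form_linear_left[OF bf] bilinear_form_linear_left[OF bf]]
    by (simp add: ring_distribs sum.distrib sum_subtractf mult_ac w_sym[of "bvec _"])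
  also have "\<dots> = w (m u (Nop w r q)) p + w (m u (Nop w r p)) q - w (m (Nop w r p) u) q"
    unfolding Nop_eq_r_sharp linear_form_r_sharp_sym[OF left_mult[of p] r_sym]
      linear_form_r_sharp[OF left_mult[of q]] linear_form_r_sharp[OF right_mult[of q]] ..
  finally show ?thesis .
qed

lemma coPYBE_Nop_identity:
  assumes bp: "bilinear_prod m" and bf: "bilinear_form w" and w_sym: "\<And>x y. w x y = w y x"
    and symplectic: "\<And>x y z. w (m x y) z + w (m x z) y = w (m z x) y + w (m z y) x"
    and r_sym: "sym_tensor r" and co_YB: "coPYBE (Delta_r m r) w"
  defines "N \<equiv> Nop w r"
  shows "(\<lambda>u. w x (m u (N y))) + (\<lambda>u. w y (m u (N x))) - (\<lambda>u. w y (m (N x) u)) + w (N (m x y))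
    = w (m (N x) y) + w (m x (N y))"
proof
  fix u
  note pairing = tpair_Delta_r_omega[OF bp bf w_sym r_sym, folded N_def]
  have YB: "w (m x (N y)) u + w (m x (N u)) y - w (m (N u) x) y
      - (w (m u (N y)) x + w (m u (N x)) y - w (m (N x) u) y)
      + (w (m y (N x)) u + w (m y (N u)) x - w (m (N u) y) x)
      - (w (m y (N u)) x + w (m y (N x)) u - w (m (N x) y) u) = 0"
    using co_YB[unfolded coPYBE_def, rule_format, where x = x and y = y and z = u]
    by (simp only: w_sym[of x] w_sym[of y] pairing)
  have "w (m x y) (N u) + w (m x (N u)) y = w (m (N u) x) y + w (m (N u) y) x"
    by (rule symplectic)
  moreover have "w (N (m x y)) u = w (m x y) (N u)"
    unfolding N_def by (rule Nop_self_adjoint[OF bf w_sym r_sym])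
  ultimately show "((\<lambda>u. w x (m u (N y))) + (\<lambda>u. w y (m u (N x))) - (\<lambda>u. w y (m (N x) u))
      + w (N (m x y))) u = (w (m (N x) y) + w (m x (N y))) u"
    using YB w_sym[of x "m u (N y)"] w_sym[of y "m u (N x)"] w_sym[of y "m (N x) u"]
    by (simp only: plus_fun_apply minus_apply) algebra
qed

theorem theorem3p9:
  fixes m :: "('k::field, 'n::finite) vec \<Rightarrow> ('k, 'n) vec \<Rightarrow> ('k, 'n) vec"
    and w :: "('k, 'n) vec \<Rightarrow> ('k, 'n) vec \<Rightarrow> 'k"
    and r :: "'n \<Rightarrow> 'n \<Rightarrow> 'k"
  assumes "symplectic_perm m w"
    and "sym_tensor r"
    and "CPYBE m r"
    and "coPYBE (Delta_r m r) w"
  shows "nijenhuis m (Nop w r)"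
  unfolding nijenhuis_def
proof (intro allI)
  fix x y
  let ?N = "Nop w r"
  have bp: "bilinear_prod m" and bf: "bilinear_form w" and w_sym: "\<And>x y. w x y = w y x"
    and symplectic: "\<And>x y z. w (m x y) z + w (m x z) y = w (m z x) y + w (m z y) x"
    using assms(1) unfolding symplectic_perm_def perm_algebra_def by auto
  have "m (?N x) (?N y) + ?N (?N (m x y))
      = r_sharp r ((\<lambda>u. w x (m u (?N y))) + (\<lambda>u. w y (m u (?N x))) - (\<lambda>u. w y (m (?N x) u))
          + w (?N (m x y)))"
    unfolding CPYBE_Nop_mult[OF bp bf assms(2,3)] Nop_eq_r_sharp[of w r "?N (m x y)"]
      r_sharp_add r_sharp_diff ..
  also have "\<dots> = r_sharp r (w (m (?N x) y) + w (m x (?N y)))"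
    unfolding coPYBE_Nop_identity[OF bp bf w_sym symplectic assms(2,4)] ..
  also have "\<dots> = ?N (m (?N x) y) + ?N (m x (?N y))"
    unfolding r_sharp_add Nop_eq_r_sharp ..
  finally show "m (?N x) (?N y) + ?N (?N (m x y)) = ?N (m (?N x) y) + ?N (m x (?N y))" .
qed

end
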